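(* Let $t>0$ and $\kappa=0$. Then $P_n^{(m)}(0)=\delta_{m0}$, so $b_n(0,t)=2\sum_{k=1}^n\binom{2n}{n-k}e^{-kt}L_{k-1}^{(1)}(2kt)$ for $n\ge1$, and near the origin $$\Phi_{0,t}^{-1}(z)=1+2\sum_{n\ge1}\frac{1}{n}e^{-nt}L_{n-1}^{(1)}(2nt)\,z^n .$$
   Context: Pochhammer symbol: $(a)_0=1$, $(a)_k=a(a+1)\cdots(a+k-1)$. Laguerre polynomials: $L_n^{(a)}(x):=\frac{1}{n!}\sum_{j=0}^n\frac{(-n)_j}{j!}(a+j+1)_{n-j}x^j$. $P_n^{(m)}(\epsilon):=\frac{(-1)^m}{m!}\sum_{k=0}^n\binom{n}{k}(-\epsilon)^k(2k)_m$. Let $\alpha(z):=\frac{1-\sqrt{1-z}}{1+\sqrt{1-z}}$ (principal branch), with inverse $\alpha^{-1}(z)=\frac{4z}{(1+z)^2}$; $\xi_{2t}(z):=\frac{z-1}{z+1}e^{tz}$; $\phi_{\kappa,t}(z):=\frac{z^2}{z^2-\kappa^2}\alpha^{-1}(\xi_{2t}(z))$; $a_n(\kappa,t):=\frac{1}{n!}\partial_z^{n-1}[(z-1)/\phi_{\kappa,t}(z)]^n|_{z=1}$; $b_n(\kappa,t):=n2^{2n}a_n(\kappa,t)$; $\Phi_{\kappa,t}:=\alpha\circ\phi_{\kappa,t}$, which is invertible near $z=1$ with $\Phi_{\kappa,t}(1)=0$, and $\Phi^{-1}_{\kappa,t}$ denotes its local inverse near $0$. *)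

theory Defs
  imports "HOL-Analysis.Analysis"
begin

definition laguerre :: "nat \<Rightarrow> real \<Rightarrow> real \<Rightarrow> real" where
  "laguerre n a x = (1 / fact n) *
     (\<Sum>j=0..n. pochhammer (- real n) j / fact j * pochhammer (a + real j + 1) (n - j) * x ^ j)"

definition Ppoly :: "nat \<Rightarrow> nat \<Rightarrow> complex \<Rightarrow> complex" where
  "Ppoly n m \<epsilon> = ((-1) ^ m / fact m) *
     (\<Sum>k=0..n. of_nat (n choose k) * (- \<epsilon>) ^ k * pochhammer (of_nat (2 * k)) m)"

definition alpha :: "complex \<Rightarrow> complex" where
  "alpha z = (1 - csqrt (1 - z)) / (1 + csqrt (1 - z))"

definition alpha_inv :: "complex \<Rightarrow> complex" where
  "alpha_inv z = 4 * z / (1 + z) ^ 2"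

text \<open>xi_{2t}(z) = (z-1)/(z+1) e^{tz}; the argument t is the t of the subscript 2t.\<close>
definition xi2t :: "real \<Rightarrow> complex \<Rightarrow> complex" where
  "xi2t t z = (z - 1) / (z + 1) * exp (of_real t * z)"

definition phi :: "complex \<Rightarrow> real \<Rightarrow> complex \<Rightarrow> complex" where
  "phi \<kappa> t z = z ^ 2 / (z ^ 2 - \<kappa> ^ 2) * alpha_inv (xi2t t z)"

definition lagr_fun :: "complex \<Rightarrow> real \<Rightarrow> complex \<Rightarrow> complex" where
  "lagr_fun \<kappa> t z = (if z = 1 then Lim (at 1) (\<lambda>w. (w - 1) / phi \<kappa> t w)
                      else (z - 1) / phi \<kappa> t z)"

definition a_coef :: "nat \<Rightarrow> complex \<Rightarrow> real \<Rightarrow> complex" where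
  "a_coef n \<kappa> t = (deriv ^^ (n - 1)) (\<lambda>z. (lagr_fun \<kappa> t z) ^ n) 1 / fact n"

definition b_coef :: "nat \<Rightarrow> complex \<Rightarrow> real \<Rightarrow> complex" where
  "b_coef n \<kappa> t = of_nat n * 2 ^ (2 * n) * a_coef n \<kappa> t"

definition Phi :: "complex \<Rightarrow> real \<Rightarrow> complex \<Rightarrow> complex" where
  "Phi \<kappa> t = alpha \<circ> phi \<kappa> t"

end

theory Submission
  imports Defs "HOL-Complex_Analysis.Complex_Analysis"
begin

unbundle no vec_syntax

text \<open>Write \<open>z = 1 + w\<close>. Then \<open>\<xi>_2t(1 + w) = w / \<psi>(w)\<close> with \<open>\<psi>(w) = e^(-t) (w + 2) e^(-tw)\<close>,
  so for \<open>\<kappa> = 0\<close> the function \<open>(z - 1) / \<phi>_0,t(z)\<close> equals \<open>(w + \<psi>(w))^2 / (4 \<psi>(w))\<close>, which is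
  holomorphic near \<open>w = 0\<close>. Hence \<open>b_n = [w^(n-1)] (w + \<psi>)^(2n) \<psi>^(-n)\<close>, and the binomial theorem
  turns this into \<open>\<Sum>_k C(2n, n - k) [w^(k-1)] \<psi>^k\<close>, where \<open>[w^(k-1)] \<psi>^k = 2 e^(-kt) L_(k-1)^(1)(2kt)\<close>
  is read off from the expansion of \<open>(w + 2)^k e^(-ktw)\<close>.

  For the inverse, \<open>\<Phi>_0,t(1 + u) = z\<close> as soon as \<open>u = z \<psi>(u)\<close> and \<open>|z| < 1\<close>, because \<open>\<alpha>\<close> inverts
  \<open>\<alpha>\<^sup>-\<^sup>1\<close> on the unit disc. Lagrange inversion gives the power series solution,
  \<open>n [z^n] u = [w^(n-1)] \<psi>^n\<close>, which is the claimed series; its coefficients are \<open>O(3^n)\<close>, so it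
  converges near \<open>0\<close>.\<close>

section \<open>Lagrange inversion\<close>

lemma fls_residue_inverse_power_times_deriv_eq_0:
  fixes F :: "'a::field_char_0 fls"
  assumes "m \<ge> 2"
  shows "fls_residue (inverse F ^ m * fls_deriv F) = 0"
proof -
  obtain k where k: "m = Suc (Suc k)" using assms by (metis add_2_eq_Suc le_Suc_ex)
  have "fls_deriv (inverse F ^ Suc k) = of_nat (Suc k) * inverse F ^ k * fls_deriv (inverse F)"
    by (simp only: fls_deriv_power diff_Suc_1)
  also have "\<dots> = - (of_nat (Suc k) * (inverse F ^ m * fls_deriv F))"
    by (simp only: fls_inverse_deriv k power2_eq_square power_Suc mult_minus_right mult_minus_left mult_ac)
  finally have "fls_residue (- (of_nat (Suc k) * (inverse F ^ m * fls_deriv F))) = 0"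
    using fls_residue_deriv[of "inverse F ^ Suc k"] by simp
  hence "of_nat (Suc k) * fls_residue (inverse F ^ m * fls_deriv F) = 0"
    by (simp only: fls_of_nat fls_residue_def fls_uminus_nth neg_equal_0_iff_equal fls_mult_const_nth)
  thus ?thesis by (simp del: of_nat_Suc fls_residue_def)
qed

lemma fls_residue_inverse_power_times_deriv:
  fixes F :: "'a::field_char_0 fls"
  assumes "fls_subdegree F = 1"
  shows "fls_residue (inverse F ^ m * fls_deriv F) = (if m = 1 then 1 else 0)"
proof -
  consider "m = 0" | "m = 1" | "m \<ge> 2" by linarith
  thus ?thesis
  proof cases
    case 1 thus ?thesis by (simp add: fls_residue_deriv)
  next
    case 2 thus ?thesis using fls_residue_deriv_times_inverse_eq_subdegree(2)[of F] assms by simp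
  next
    case 3 thus ?thesis using fls_residue_inverse_power_times_deriv_eq_0[OF 3] by simp
  qed
qed

lemma fls_residue_inverse_power_times_fps_eq_0:
  fixes F :: "'a::field_char_0 fls" and R :: "'a fps"
  assumes F: "fls_subdegree F = 1" and R: "\<And>i. i < n \<Longrightarrow> R $ i = 0"
  shows "fls_residue (inverse F ^ n * fps_to_fls R) = 0"
proof (cases "R = 0")
  case False
  have "F \<noteq> 0" using F by auto
  moreover have "subdegree R \<ge> n" using False R by (intro subdegree_geI) auto
  ultimately have "fls_subdegree (inverse F ^ n * fps_to_fls R) \<ge> 0"
    using False F by (simp add: fls_subdegree_pow fls_subdegree_fls_to_fps)
  thus ?thesis by (rule fls_residue_power_series)
qed simp

lemma fls_residue_inverse_power_times_poly_deriv:
  fixes F :: "'a::field_char_0 fls"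
  assumes F: "fls_subdegree F = 1" and n: "n > 0"
  shows "fls_residue (inverse F ^ n * (\<Sum>k=0..n. fls_const (c k) * F ^ k) * fls_deriv F) = c (n - 1)"
proof -
  have "F \<noteq> 0" using F by auto
  have power: "inverse F ^ n * F ^ k = inverse F ^ (n - k)" if "k \<le> n" for k
  proof -
    have "inverse F ^ n * F ^ k = inverse F ^ (n - k) * (inverse F * F) ^ k"
      using that by (simp add: power_mult_distrib mult.assoc power_add[symmetric])
    thus ?thesis using \<open>F \<noteq> 0\<close> by simp
  qed
  have "inverse F ^ n * (\<Sum>k=0..n. fls_const (c k) * F ^ k) * fls_deriv F
      = (\<Sum>k=0..n. fls_const (c k) * (inverse F ^ (n - k) * fls_deriv F))"
    unfolding sum_distrib_left sum_distrib_right
    by (intro sum.cong refl) (simp add: power[symmetric] ac_simps)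
  also have "fls_residue \<dots> = (\<Sum>k=0..n. c k * (if n - k = 1 then 1 else 0))"
    by (simp add: fls_residue_def fls_nth_sum fls_residue_inverse_power_times_deriv[OF F, unfolded fls_residue_def])
  also have "\<dots> = (\<Sum>k=0..n. if k = n - 1 then c k else 0)"
    using n by (intro sum.cong refl) auto
  also have "\<dots> = c (n - 1)" by simp
  finally show ?thesis .
qed

text \<open>This is \<open>n g_n = res (g'(w) w^(-n))\<close> for \<open>g = f\<^sup>-\<^sup>1\<close> after substituting \<open>w = f(x)\<close>.
  Since Laurent series cannot be composed, \<open>g' \<circ> f\<close> is split into the polynomial \<open>P\<close> in \<open>f\<close>, whose
  residues are computed termwise, and a remainder of order \<open>> n\<close>, which contributes nothing.\<close>
lemma fps_inv_nth_eq_residue: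
  fixes f :: "'a::field_char_0 fps"
  assumes f0: "f $ 0 = 0" and f1: "f $ 1 \<noteq> 0" and n: "n > 0"
  shows "of_nat n * fps_inv f $ n = fls_residue (inverse (fps_to_fls f) ^ n)"
proof -
  define g where "g = fps_inv f"
  define F where "F = fps_to_fls f"
  define Q where "Q = fps_deriv g oo f"
  define P where "P = (\<Sum>k=0..n. fps_const (fps_deriv g $ k) * f ^ k)"
  have "subdegree f = 1" using f0 f1 by (intro subdegreeI) auto
  hence subF: "fls_subdegree F = 1" by (simp add: F_def fls_subdegree_fls_to_fps)
  have "Q * fps_deriv f = fps_deriv (g oo f)"
    unfolding Q_def by (rule fps_compose_deriv[OF f0, symmetric])
  also have "g oo f = fps_X"
    unfolding g_def by (rule fps_inv[OF f0 f1])
  finally have Q_deriv: "Q * fps_deriv f = 1" by simp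
  have QP_low: "Q $ m = P $ m" if "m \<le> n" for m
  proof -
    have "Q $ m = (\<Sum>k=0..m. fps_deriv g $ k * (f ^ k) $ m)"
      unfolding Q_def by (rule fps_compose_nth)
    also have "\<dots> = (\<Sum>k=0..n. fps_deriv g $ k * (f ^ k) $ m)"
      using that startsby_zero_power_prefix[OF f0] by (intro sum.mono_neutral_left) auto
    also have "\<dots> = P $ m" by (simp add: P_def fps_sum_nth)
    finally show ?thesis .
  qed
  have "inverse F ^ n = inverse F ^ n * fps_to_fls (Q * fps_deriv f)"
    using Q_deriv by simp
  also have "\<dots> = inverse F ^ n * fps_to_fls P * fls_deriv F
                 + inverse F ^ n * fps_to_fls ((Q - P) * fps_deriv f)"
    by (simp add: F_def fls_deriv_fps_to_fls fls_times_fps_to_fls algebra_simps)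
  also have "fps_to_fls P = (\<Sum>k=0..n. fls_const (fps_deriv g $ k) * F ^ k)"
    unfolding P_def F_def by (induction n) (simp_all add: fls_times_fps_to_fls fps_to_fls_power)
  finally have split: "inverse F ^ n
      = inverse F ^ n * (\<Sum>k=0..n. fls_const (fps_deriv g $ k) * F ^ k) * fls_deriv F
        + inverse F ^ n * fps_to_fls ((Q - P) * fps_deriv f)" .
  have "fls_residue (inverse F ^ n)
      = fps_deriv g $ (n - 1) + fls_residue (inverse F ^ n * fps_to_fls ((Q - P) * fps_deriv f))"
    by (subst split) (simp only: fls_residue_add fls_residue_inverse_power_times_poly_deriv[OF subF n])
  also have "fls_residue (inverse F ^ n * fps_to_fls ((Q - P) * fps_deriv f)) = 0"
    by (rule fls_residue_inverse_power_times_fps_eq_0[OF subF])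
       (auto simp: fps_mult_nth QP_low intro!: sum.neutral)
  finally show ?thesis using n by (simp add: g_def F_def)
qed

theorem fps_lagrange_inversion:
  fixes \<phi> :: "'a::field_char_0 fps"
  assumes \<phi>0: "\<phi> $ 0 \<noteq> 0" and n: "n > 0"
  shows "of_nat n * fps_inv (fps_X * inverse \<phi>) $ n = (\<phi> ^ n) $ (n - 1)"
proof -
  have "fps_to_fls (inverse \<phi>) * fps_to_fls \<phi> = 1"
    using \<phi>0 by (simp add: fls_times_fps_to_fls[symmetric] inverse_mult_eq_1)
  hence "inverse (fps_to_fls (inverse \<phi>)) = fps_to_fls \<phi>"
    by (metis inverse_unique mult.commute)
  hence "inverse (fps_to_fls (fps_X * inverse \<phi>)) ^ n = fls_shift (int n) (fps_to_fls (\<phi> ^ n))"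
    by (simp add: fls_times_fps_to_fls fls_inverse_X power_mult_distrib fps_to_fls_power
                  fls_X_inv_power_times_conv_shift(1))
  moreover have "nat (int n - 1) = n - 1" using n by linarith
  ultimately show ?thesis
    using fps_inv_nth_eq_residue[of "fps_X * inverse \<phi>" n] \<phi>0 n by simp
qed

section \<open>Laguerre polynomials as Taylor coefficients\<close>

lemma pochhammer_of_nat_plus_1: "pochhammer (real m + 1) k = fact (m + k) / fact m"
proof (induction k)
  case (Suc k)
  have "pochhammer (real m + 1) (Suc k) = fact (m + k) / fact m * (real (m + k) + 1)"
    by (simp only: pochhammer_Suc Suc.IH) simp
  also have "\<dots> = fact (m + Suc k) / fact m" by (simp add: field_simps)
  finally show ?case .
qed simp

lemma pochhammer_minus_of_nat:
  assumes "j \<le> N"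
  shows "pochhammer (- real N) j = (-1) ^ j * fact N / fact (N - j)"
proof -
  have "real N - real j + 1 = real (N - j) + 1" using assms by simp
  hence "pochhammer (real N - real j + 1) j = fact N / fact (N - j)"
    using pochhammer_of_nat_plus_1[of "N - j" j] assms by simp
  thus ?thesis by (simp add: pochhammer_minus)
qed

lemma laguerre_1_eq:
  "laguerre N 1 x = (\<Sum>j=0..N. (-1) ^ j * real (Suc N choose Suc j) * x ^ j / fact j)"
  unfolding laguerre_def sum_distrib_left
proof (intro sum.cong refl)
  fix j assume "j \<in> {0..N}"
  hence j: "j \<le> N" by simp
  have p: "pochhammer (1 + real j + 1) (N - j) = fact (Suc N) / fact (Suc j)"
    using pochhammer_of_nat_plus_1[of "Suc j" "N - j"] j by (simp add: add.commute)
  have b: "real (Suc N choose Suc j) = fact (Suc N) / (fact (Suc j) * fact (N - j))"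
    using binomial_fact[of "Suc j" "Suc N"] j by simp
  show "1 / fact N * (pochhammer (- real N) j / fact j * pochhammer (1 + real j + 1) (N - j) * x ^ j)
        = (-1) ^ j * real (Suc N choose Suc j) * x ^ j / fact j"
    unfolding p b pochhammer_minus_of_nat[OF j] by (simp add: field_simps del: fact_Suc of_nat_Suc)
qed

lemma fps_X_plus_const_power_nth:
  fixes c :: "'a::comm_ring_1"
  shows "((fps_X + fps_const c) ^ m) $ i = of_nat (m choose i) * c ^ (m - i)"
proof (induction m arbitrary: i)
  case (Suc m)
  have "((fps_X + fps_const c) ^ Suc m) $ i
      = (fps_X * (fps_X + fps_const c) ^ m) $ i + c * ((fps_X + fps_const c) ^ m) $ i"
    by (simp add: algebra_simps)
  also have "\<dots> = (if i = 0 then 0 else of_nat (m choose (i - 1)) * c ^ (m - (i - 1)))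
                  + c * (of_nat (m choose i) * c ^ (m - i))"
    by (simp add: Suc.IH)
  also have "\<dots> = of_nat (Suc m choose i) * c ^ (Suc m - i)"
  proof (cases i)
    case (Suc k)
    show ?thesis
    proof (cases "k \<le> m")
      case True
      hence "m - k = Suc (m - Suc k) \<or> k = m" by linarith
      thus ?thesis using Suc True by (auto simp: algebra_simps binomial_eq_0)
    qed (use Suc in \<open>simp add: binomial_eq_0\<close>)
  qed simp
  finally show ?case .
qed (simp add: binomial_eq_0)

lemma fps_X_plus_numeral_power_nth:
  "((fps_X + numeral c :: 'a::comm_ring_1 fps) ^ m) $ i = of_nat (m choose i) * numeral c ^ (m - i)"
  using fps_X_plus_const_power_nth[of "numeral c" m i] by (simp only: fps_numeral_fps_const[symmetric])

lemma fps_nth_laguerre_1: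
  "((fps_X + 2) ^ Suc N * fps_exp (- complex_of_real x / 2)) $ N = 2 * complex_of_real (laguerre N 1 x)"
proof -
  define c where "c = - complex_of_real x / 2"
  have "((fps_X + 2) ^ Suc N * fps_exp c) $ N
      = (\<Sum>i=0..N. of_nat (Suc N choose i) * 2 ^ (Suc N - i) * (c ^ (N - i) / fact (N - i)))"
    by (simp only: fps_mult_nth fps_X_plus_numeral_power_nth fps_exp_nth of_nat_fact)
  also have "\<dots> = (\<Sum>j=0..N. of_nat (Suc N choose (N - j)) * 2 ^ (Suc N - (N - j))
                               * (c ^ (N - (N - j)) / fact (N - (N - j))))"
    by (subst sum.atLeastAtMost_rev) simp
  also have "\<dots> = (\<Sum>j=0..N. 2 * complex_of_real ((-1) ^ j * real (Suc N choose Suc j) * x ^ j / fact j))"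
  proof (intro sum.cong refl)
    fix j assume "j \<in> {0..N}"
    hence j: "j \<le> N" by simp
    have ch: "Suc N choose (N - j) = Suc N choose Suc j"
      using binomial_symmetric[of "Suc j" "Suc N"] j by simp
    have ex: "Suc N - (N - j) = Suc j" "N - (N - j) = j" using j by auto
    have cj: "c ^ j = (-1) ^ j * complex_of_real x ^ j / 2 ^ j"
    proof -
      have "c = (-1) * (complex_of_real x / 2)" by (simp add: c_def)
      thus ?thesis by (simp only: power_mult_distrib power_divide times_divide_eq_right)
    qed
    show "of_nat (Suc N choose (N - j)) * 2 ^ (Suc N - (N - j)) * (c ^ (N - (N - j)) / fact (N - (N - j)))
        = 2 * complex_of_real ((-1) ^ j * real (Suc N choose Suc j) * x ^ j / fact j)"
      unfolding ch ex cj by (simp add: field_simps del: binomial_Suc_Suc)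
  qed
  also have "\<dots> = 2 * complex_of_real (laguerre N 1 x)"
    by (simp add: laguerre_1_eq sum_distrib_left)
  finally show ?thesis unfolding c_def .
qed

section \<open>The function \<open>\<psi>\<close>\<close>

definition psi :: "real \<Rightarrow> complex \<Rightarrow> complex" where
  "psi t w = exp (- complex_of_real t) * (w + 2) * exp (- complex_of_real t * w)"

definition psi_fps :: "real \<Rightarrow> complex fps" where
  "psi_fps t = fps_const (exp (- complex_of_real t)) * (fps_X + 2) * fps_exp (- complex_of_real t)"

lemma psi_has_fps_expansion: "psi t has_fps_expansion psi_fps t"
  unfolding psi_def[abs_def] psi_fps_def by (intro fps_expansion_intros)

lemma psi_fps_nth_0: "psi_fps t $ 0 \<noteq> 0"
  by (simp add: psi_fps_def)

lemma psi_fps_power: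
  "psi_fps t ^ k = fps_const (exp (- complex_of_real t) ^ k)
      * ((fps_X + 2) ^ k * fps_exp (- (of_nat k * complex_of_real t)))"
  unfolding psi_fps_def power_mult_distrib fps_const_power fps_exp_power_mult
  by (simp add: mult_ac)

lemma psi_fps_power_nth:
  assumes "k > 0"
  shows "(psi_fps t ^ k) $ (k - 1)
     = 2 * complex_of_real (exp (- (real k * t)) * laguerre (k - 1) 1 (2 * real k * t))"
proof -
  obtain N where k: "k = Suc N" using assms by (cases k) auto
  have "- (of_nat k * complex_of_real t) = - complex_of_real (2 * real k * t) / 2" by simp
  moreover have "exp (- complex_of_real t) ^ k = complex_of_real (exp (- (real k * t)))"
    by (simp add: exp_of_nat_mult[symmetric] exp_of_real[symmetric])
  ultimately show ?thesis unfolding psi_fps_power k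
    by (simp only: fps_mult_left_const_nth fps_nth_laguerre_1 diff_Suc_1) simp
qed

lemma psi_eq_0_iff: "psi t w = 0 \<longleftrightarrow> w = -2"
  by (simp add: psi_def eq_neg_iff_add_eq_0)

lemma xi2t_one_plus:
  assumes "w \<noteq> -2"
  shows "xi2t t (1 + w) = w / psi t w"
proof -
  have "w + 2 \<noteq> 0" using assms by (simp add: eq_neg_iff_add_eq_0)
  thus ?thesis
    by (simp add: xi2t_def psi_def exp_minus exp_add distrib_left field_simps)
qed

section \<open>The coefficients \<open>b_n(0, t)\<close>\<close>

lemma fps_nth_binomial_kernel_power:
  fixes \<psi> :: "'a::field_char_0 fps"
  assumes \<psi>0: "\<psi> $ 0 \<noteq> 0" and n: "n > 0"
  shows "(((fps_X + \<psi>) ^ 2 * inverse \<psi>) ^ n) $ (n - 1)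
           = (\<Sum>k=1..n. of_nat (2 * n choose (n - k)) * (\<psi> ^ k) $ (k - 1))"
proof -
  have inv: "\<psi> * inverse \<psi> = 1" using \<psi>0 by (simp add: inverse_mult_eq_1')
  have term_nth: "(of_nat c * (fps_X ^ j * (\<psi> ^ (2 * n - j) * inverse \<psi> ^ n))) $ (n - 1)
      = (if j < n then of_nat c * (\<psi> ^ (n - j)) $ (n - 1 - j) else 0)" for c j
  proof (cases "j < n")
    case True
    have "2 * n - j = (n - j) + n" using True by simp
    hence "\<psi> ^ (2 * n - j) * inverse \<psi> ^ n = \<psi> ^ (n - j) * (\<psi> * inverse \<psi>) ^ n"
      by (simp only: power_add power_mult_distrib mult.assoc)
    thus ?thesis using True inv by (simp add: fps_X_power_mult_nth flip: fps_of_nat)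
  qed (use n in \<open>simp add: fps_X_power_mult_nth flip: fps_of_nat\<close>)
  have "((fps_X + \<psi>) ^ 2 * inverse \<psi>) ^ n = (fps_X + \<psi>) ^ (2 * n) * inverse \<psi> ^ n"
    by (simp only: power_mult_distrib power_mult)
  also have "(fps_X + \<psi>) ^ (2 * n) = (\<Sum>j\<le>2 * n. of_nat (2 * n choose j) * fps_X ^ j * \<psi> ^ (2 * n - j))"
    by (rule binomial_ring)
  also have "\<dots> * inverse \<psi> ^ n
      = (\<Sum>j\<le>2 * n. of_nat (2 * n choose j) * (fps_X ^ j * (\<psi> ^ (2 * n - j) * inverse \<psi> ^ n)))"
    unfolding sum_distrib_right by (intro sum.cong refl) (simp only: mult_ac)
  finally have expand: "((fps_X + \<psi>) ^ 2 * inverse \<psi>) ^ n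
      = (\<Sum>j\<le>2 * n. of_nat (2 * n choose j) * (fps_X ^ j * (\<psi> ^ (2 * n - j) * inverse \<psi> ^ n)))" .
  have "(((fps_X + \<psi>) ^ 2 * inverse \<psi>) ^ n) $ (n - 1)
      = (\<Sum>j\<le>2 * n. if j < n then of_nat (2 * n choose j) * (\<psi> ^ (n - j)) $ (n - 1 - j) else 0)"
    unfolding expand fps_sum_nth term_nth ..
  also have "\<dots> = (\<Sum>j<n. of_nat (2 * n choose j) * (\<psi> ^ (n - j)) $ (n - 1 - j))"
  proof -
    have "{j \<in> {..2 * n}. j < n} = {..<n}" by auto
    thus ?thesis by (simp only: sum.inter_filter[symmetric, OF finite_atMost])
  qed
  also have "\<dots> = (\<Sum>k=1..n. of_nat (2 * n choose (n - k)) * (\<psi> ^ k) $ (k - 1))"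
    by (rule sum.reindex_bij_witness[of _ "\<lambda>k. n - k" "\<lambda>j. n - j"]) auto
  finally show ?thesis .
qed

lemma div_alpha_inv_div:
  assumes "p \<noteq> 0" "w \<noteq> 0"
  shows "w / alpha_inv (w / p) = (w + p) ^ 2 / (4 * p)"
proof (cases "w + p = 0")
  case True
  hence "1 + w / p = 0" using assms(1) by (simp add: field_simps)
  thus ?thesis using True by (simp add: alpha_inv_def)
next
  case False
  hence "1 + w / p \<noteq> 0" using assms(1) by (simp add: field_simps)
  thus ?thesis using assms by (simp add: alpha_inv_def field_simps power2_eq_square)
qed

text \<open>The function \<open>(z - 1) / \<phi>_0,t(z)\<close> in the variable \<open>w = z - 1\<close>.\<close>
definition lagr_fun0 :: "real \<Rightarrow> complex \<Rightarrow> complex" where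
  "lagr_fun0 t w = (w + psi t w) ^ 2 / (4 * psi t w)"

lemma quotient_phi_0_eq_lagr_fun0:
  assumes "w \<noteq> 0" "norm w < 1"
  shows "w / phi 0 t (1 + w) = lagr_fun0 t w"
proof -
  have "w \<noteq> -1" "w \<noteq> -2" using assms(2) by auto
  hence "phi 0 t (1 + w) = alpha_inv (w / psi t w)"
    by (simp add: phi_def xi2t_one_plus add_eq_0_iff)
  thus ?thesis using assms \<open>w \<noteq> -2\<close> by (simp add: lagr_fun0_def div_alpha_inv_div psi_eq_0_iff)
qed

lemma lagr_fun0_holomorphic: "lagr_fun0 t holomorphic_on ball 0 1"
proof -
  have "psi t w \<noteq> 0" if "w \<in> ball 0 1" for w using that by (auto simp: psi_eq_0_iff)
  thus ?thesis unfolding lagr_fun0_def psi_def[abs_def] by (intro holomorphic_intros) (auto simp: psi_def)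
qed

lemma lagr_fun_0_one_plus:
  assumes "norm w < 1"
  shows "lagr_fun 0 t (1 + w) = lagr_fun0 t w"
proof (cases "w = 0")
  case True
  have "eventually (\<lambda>z. lagr_fun0 t (z - 1) = (z - 1) / phi 0 t z) (at 1)"
    unfolding eventually_at
    by (rule exI[of _ 1]) (auto simp: dist_norm quotient_phi_0_eq_lagr_fun0[of "_ - 1", simplified])
  moreover have "((\<lambda>z. lagr_fun0 t (z - 1)) \<longlongrightarrow> lagr_fun0 t 0) (at 1)"
  proof -
    have "isCont (lagr_fun0 t) 0"
      using lagr_fun0_holomorphic holomorphic_on_imp_continuous_on by (force simp: continuous_on_eq_continuous_at)
    thus ?thesis by (rule isCont_tendsto_compose) (auto intro!: tendsto_eq_intros)
  qed
  ultimately have "((\<lambda>z. (z - 1) / phi 0 t z) \<longlongrightarrow> lagr_fun0 t 0) (at 1)"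
    using tendsto_cong by fastforce
  thus ?thesis using True by (simp add: lagr_fun_def tendsto_Lim)
qed (use assms in \<open>simp add: lagr_fun_def quotient_phi_0_eq_lagr_fun0\<close>)

definition lagr_fun0_fps :: "real \<Rightarrow> complex fps" where
  "lagr_fun0_fps t = fps_const (1/4) * (fps_X + psi_fps t) ^ 2 * inverse (psi_fps t)"

lemma lagr_fun0_has_fps_expansion: "lagr_fun0 t has_fps_expansion lagr_fun0_fps t"
proof -
  have "lagr_fun0 t = (\<lambda>w. 1/4 * (w + psi t w) ^ 2 * inverse (psi t w))"
    by (rule ext) (simp add: lagr_fun0_def field_simps)
  thus ?thesis unfolding lagr_fun0_fps_def
    by (simp only:) (intro fps_expansion_intros psi_has_fps_expansion psi_fps_nth_0)
qed

lemma a_coef_0_eq: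
  assumes n: "n > 0"
  shows "of_nat n * a_coef n 0 t = (lagr_fun0_fps t ^ n) $ (n - 1)"
proof -
  define f where "f = (\<lambda>w. lagr_fun0 t w ^ n)"
  have holo: "f holomorphic_on ball 0 1"
    unfolding f_def using lagr_fun0_holomorphic by (intro holomorphic_intros)
  have shifted: "(\<lambda>z. f (z - 1)) holomorphic_on ball 1 1"
    by (rule holomorphic_on_compose_gen[OF _ holo, unfolded o_def])
       (auto intro!: holomorphic_intros simp: dist_norm norm_minus_commute)
  have eq: "f (z - 1) = lagr_fun 0 t z ^ n" if "z \<in> ball 1 1" for z
    using lagr_fun_0_one_plus[of "z - 1" t] that by (simp add: f_def dist_norm norm_minus_commute)
  have "(deriv ^^ (n - 1)) (\<lambda>z. lagr_fun 0 t z ^ n) 1 = (deriv ^^ (n - 1)) (\<lambda>z. f (z - 1)) 1"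
    by (rule higher_deriv_transform_within_open[OF holomorphic_transform[OF shifted eq] shifted])
       (simp_all add: eq)
  also have "\<dots> = (deriv ^^ (n - 1)) f 0"
    using higher_deriv_compose_linear'[OF holo, of "ball 1 1" 1 1 "- 1" "n - 1"]
    by (simp add: dist_norm norm_minus_commute)
  also have "\<dots> = (lagr_fun0_fps t ^ n) $ (n - 1) * fact (n - 1)"
    using fps_nth_fps_expansion[of f "lagr_fun0_fps t ^ n" "n - 1"]
    unfolding f_def by (simp add: has_fps_expansion_power lagr_fun0_has_fps_expansion)
  finally show ?thesis
    using n by (simp add: a_coef_def fact_reduce[of n])
qed

lemma b_coef_0_eq:
  assumes n: "n > 0"
  shows "b_coef n 0 t = 2 * (\<Sum>k=1..n. of_nat ((2 * n) choose (n - k)) *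
           complex_of_real (exp (- (real k * t)) * laguerre (k - 1) 1 (2 * real k * t)))"
proof -
  have "b_coef n 0 t = 4 ^ n * (lagr_fun0_fps t ^ n) $ (n - 1)"
    using a_coef_0_eq[OF n, of t] by (simp add: b_coef_def power_mult mult.assoc)
  also have "\<dots> = (((fps_X + psi_fps t) ^ 2 * inverse (psi_fps t)) ^ n) $ (n - 1)"
    by (simp add: lagr_fun0_fps_def power_mult_distrib fps_const_power mult.assoc power_divide)
  also have "\<dots> = (\<Sum>k=1..n. of_nat (2 * n choose (n - k)) * (psi_fps t ^ k) $ (k - 1))"
    by (rule fps_nth_binomial_kernel_power[OF psi_fps_nth_0 n])
  also have "\<dots> = 2 * (\<Sum>k=1..n. of_nat ((2 * n) choose (n - k)) *
           complex_of_real (exp (- (real k * t)) * laguerre (k - 1) 1 (2 * real k * t)))"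
    unfolding sum_distrib_left by (intro sum.cong refl, subst psi_fps_power_nth) auto
  finally show ?thesis .
qed

section \<open>The local inverse of \<open>\<Phi>_0,t\<close>\<close>

lemma power_div_fact_le_exp:
  assumes "0 \<le> (x::real)"
  shows "x ^ m / fact m \<le> exp x"
proof -
  have s: "(\<lambda>n. x ^ n / fact n) sums exp x"
    using exp_converges[of x] by (simp add: divide_inverse mult.commute)
  have "sum (\<lambda>n. x ^ n / fact n) {m} \<le> suminf (\<lambda>n. x ^ n / fact n)"
    by (rule sum_le_suminf) (use s assms in \<open>auto simp: sums_iff\<close>)
  thus ?thesis using s by (simp add: sums_iff)
qed

lemma norm_psi_fps_power_nth_le:
  assumes t: "t \<ge> 0" and N: "N < k"
  shows "norm ((psi_fps t ^ k) $ N) \<le> 3 ^ k"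
proof -
  define S where "S = (\<Sum>i=0..N. of_nat (k choose i) * 2 ^ (k - i)
                          * ((- (of_nat k * complex_of_real t)) ^ (N - i) / fact (N - i)))"
  have "(psi_fps t ^ k) $ N = exp (- complex_of_real t) ^ k * S"
    unfolding S_def psi_fps_power fps_mult_left_const_nth
    by (simp only: fps_mult_nth fps_X_plus_numeral_power_nth fps_exp_nth of_nat_fact)
  hence "norm ((psi_fps t ^ k) $ N) = exp (- (real k * t)) * norm S"
    by (simp add: norm_mult norm_power exp_of_nat_mult[symmetric])
  also have "\<dots> \<le> exp (- (real k * t)) *
      (\<Sum>i=0..N. real (k choose i) * 2 ^ (k - i) * ((real k * t) ^ (N - i) / fact (N - i)))"
    unfolding S_def using t
    by (intro mult_left_mono order.trans[OF norm_sum])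
       (simp_all add: norm_mult norm_divide norm_power abs_of_nonneg)
  also have "\<dots> \<le> exp (- (real k * t)) * (\<Sum>i=0..N. real (k choose i) * 2 ^ (k - i) * exp (real k * t))"
  proof (rule mult_left_mono, rule sum_mono)
    fix i
    show "real (k choose i) * 2 ^ (k - i) * ((real k * t) ^ (N - i) / fact (N - i))
        \<le> real (k choose i) * 2 ^ (k - i) * exp (real k * t)"
      using t by (intro mult_left_mono power_div_fact_le_exp) simp_all
  qed simp
  also have "\<dots> = (\<Sum>i=0..N. real (k choose i) * 2 ^ (k - i)) * (exp (real k * t) * exp (- (real k * t)))"
    by (simp add: sum_distrib_left sum_distrib_right mult_ac)
  also have "\<dots> \<le> (\<Sum>i\<le>k. real (k choose i) * 2 ^ (k - i))"
    using N by (simp add: exp_minus_inverse sum_mono2)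
  also have "\<dots> = 3 ^ k"
    using binomial_ring[of "1::real" 2 k] by simp
  finally show ?thesis .
qed

lemma fps_conv_radius_pos_if_nth_le_power:
  fixes f :: "'a::{banach, real_normed_div_algebra} fps"
  assumes bound: "\<And>n. norm (f $ n) \<le> C ^ n" and C: "C > 0"
  shows "fps_conv_radius f > 0"
proof -
  define z :: 'a where "z = of_real (1 / (2 * C))"
  have norm_z: "norm z = 1 / (2 * C)" unfolding z_def norm_of_real using C by simp
  have bound_z: "norm (norm (f $ n * z ^ n)) \<le> (1/2) ^ n" for n
  proof -
    have "norm (f $ n * z ^ n) \<le> C ^ n * (1 / (2 * C)) ^ n"
      unfolding norm_mult norm_power norm_z
      using C by (intro mult_right_mono bound) auto
    also have "\<dots> = (C * (1 / (2 * C))) ^ n" by (rule power_mult_distrib[symmetric])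
    also have "C * (1 / (2 * C)) = 1 / 2" using C by simp
    finally show ?thesis by (simp only: real_norm_def abs_norm_cancel)
  qed
  have "summable (\<lambda>n. (1/2::real) ^ n)" by (rule summable_geometric) simp
  hence "summable (\<lambda>n. norm (f $ n * z ^ n))"
    by (rule summable_comparison_test') (rule bound_z)
  hence "summable (\<lambda>n. f $ n * z ^ n)" by (rule summable_norm_cancel)
  hence "conv_radius (fps_nth f) \<ge> ereal (norm z)" by (rule conv_radius_geI)
  moreover have "0 < ereal (norm z)" using C by (simp add: norm_z)
  ultimately show ?thesis unfolding fps_conv_radius_def by (rule order.strict_trans2[rotated])
qed

lemma eventually_norm_less_fps_conv_radius:
  fixes f :: "complex fps"
  assumes "fps_conv_radius f > 0"
  shows "eventually (\<lambda>z. ereal (norm z) < fps_conv_radius f) (nhds 0)"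
proof -
  have "eventually (\<lambda>z. z \<in> eball 0 (fps_conv_radius f)) (nhds 0)"
    using assms by (intro eventually_nhds_in_open) (auto simp: zero_ereal_def)
  thus ?thesis by (rule eventually_mono) (simp add: dist_norm)
qed

lemma eventually_norm_eval_fps_less:
  fixes f :: "complex fps"
  assumes "fps_conv_radius f > 0" "f $ 0 = 0" "\<epsilon> > 0"
  shows "eventually (\<lambda>z. norm (eval_fps f z) < \<epsilon>) (nhds 0)"
proof -
  have "isCont (eval_fps f) 0"
    using assms(1) by (intro continuous_eval_fps) (simp add: zero_ereal_def)
  hence "(eval_fps f \<longlongrightarrow> eval_fps f 0) (nhds 0)"
    unfolding isCont_def tendsto_at_iff_tendsto_nhds .
  hence "((\<lambda>z. norm (eval_fps f z)) \<longlongrightarrow> 0) (nhds 0)"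
    using tendsto_norm assms(2) by (fastforce simp: eval_fps_at_0)
  thus ?thesis by (rule order_tendstoD(2)) (rule assms(3))
qed

text \<open>The power series \<open>u\<close> with \<open>u = z \<psi>(u)\<close>, so that \<open>\<Phi>_0,t\<^sup>-\<^sup>1(z) = 1 + u(z)\<close>.\<close>
definition Phi0_inv_fps :: "real \<Rightarrow> complex fps" where
  "Phi0_inv_fps t = fps_inv (fps_X * inverse (psi_fps t))"

lemma Phi0_inv_fps_nth_0: "Phi0_inv_fps t $ 0 = 0"
  by (simp add: Phi0_inv_fps_def fps_inv_def)

lemma Phi0_inv_fps_nth_Suc:
  "Phi0_inv_fps t $ Suc n = 2 * complex_of_real
     (exp (- (real (Suc n) * t)) * laguerre n 1 (2 * real (Suc n) * t) / real (Suc n))"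
proof -
  have "of_nat (Suc n) * Phi0_inv_fps t $ Suc n = (psi_fps t ^ Suc n) $ n"
    using fps_lagrange_inversion[OF psi_fps_nth_0, of "Suc n" t] by (simp add: Phi0_inv_fps_def)
  thus ?thesis using psi_fps_power_nth[of "Suc n" t]
    by (simp add: field_simps del: of_nat_Suc)
qed

lemma norm_Phi0_inv_fps_nth_le:
  assumes "t \<ge> 0"
  shows "norm (Phi0_inv_fps t $ n) \<le> 3 ^ n"
proof (cases n)
  case (Suc N)
  have "norm (Phi0_inv_fps t $ n) \<le> real n * norm (Phi0_inv_fps t $ n)"
    using Suc by (intro mult_le_cancel_right1[THEN iffD2]) auto
  also have "\<dots> = norm ((psi_fps t ^ n) $ N)"
    using fps_lagrange_inversion[OF psi_fps_nth_0, of n t] Suc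
    by (metis Phi0_inv_fps_def diff_Suc_1 norm_mult norm_of_nat zero_less_Suc)
  also have "\<dots> \<le> 3 ^ n" using Suc by (intro norm_psi_fps_power_nth_le assms) auto
  finally show ?thesis .
qed (simp add: Phi0_inv_fps_nth_0)

lemma Phi0_inv_fps_conv_radius_pos: "t \<ge> 0 \<Longrightarrow> fps_conv_radius (Phi0_inv_fps t) > 0"
  by (rule fps_conv_radius_pos_if_nth_le_power[OF norm_Phi0_inv_fps_nth_le]) auto

lemma Phi0_inv_fps_fixpoint: "Phi0_inv_fps t = fps_X * (psi_fps t oo Phi0_inv_fps t)"
proof -
  define g where "g = Phi0_inv_fps t"
  define f where "f = fps_X * inverse (psi_fps t)"
  have g0: "g $ 0 = 0" by (simp add: g_def Phi0_inv_fps_nth_0)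
  have \<psi>g0: "(psi_fps t oo g) $ 0 \<noteq> 0" using psi_fps_nth_0[of t] by simp
  have "f oo g = fps_X"
    unfolding g_def Phi0_inv_fps_def f_def[symmetric]
    by (rule fps_inv_right) (use psi_fps_nth_0[of t] in \<open>simp_all add: f_def\<close>)
  moreover have "f oo g = g * inverse (psi_fps t oo g)"
    unfolding f_def using g0 psi_fps_nth_0[of t]
    by (simp add: fps_compose_mult_distrib fps_inverse_compose)
  ultimately have "g = fps_X * (psi_fps t oo g)"
    using \<psi>g0 by (metis inverse_mult_eq_1 mult.assoc mult.commute mult.right_neutral)
  thus ?thesis unfolding g_def .
qed

lemma alpha_alpha_inv:
  assumes z: "norm z < 1"
  shows "alpha (alpha_inv z) = z"
proof -
  have z1: "1 + z \<noteq> 0" using z by (metis add.inverse_unique norm_minus_cancel norm_one order.irrefl add.commute)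
  define b where "b = (1 - z) / (1 + z)"
  have "1 - alpha_inv z = b ^ 2"
  proof -
    have "(1 + z) ^ 2 - 4 * z = (1 - z) ^ 2" by (simp add: power2_eq_square algebra_simps)
    moreover have "((1 + z) ^ 2 - 4 * z) / (1 + z) ^ 2 = 1 - 4 * z / (1 + z) ^ 2"
      using z1 by (simp add: diff_divide_distrib)
    ultimately show ?thesis unfolding alpha_inv_def b_def power_divide by simp
  qed
  moreover have "Re b > 0"
  proof -
    have "Re ((1 - z) * cnj (1 + z)) = 1 - (norm z)^2"
      using cmod_power2[of z] by (simp add: algebra_simps power2_eq_square)
    thus ?thesis unfolding b_def Re_complex_div_gt_0 using z by (simp add: abs_square_less_1)
  qed
  ultimately have "csqrt (1 - alpha_inv z) = b" by (simp add: csqrt_square)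
  moreover have "1 - b = 2 * z / (1 + z)" "1 + b = 2 / (1 + z)"
    using z1 by (simp_all add: b_def field_simps)
  ultimately show ?thesis unfolding alpha_def using z1 by simp
qed

lemma Phi_0_one_plus_fixpoint:
  assumes "norm z < 1" "u \<noteq> -1" "u \<noteq> -2" and fixpoint: "u = z * psi t u"
  shows "Phi 0 t (1 + u) = z"
proof -
  have "xi2t t (1 + u) = z"
    using assms(3) fixpoint by (simp add: xi2t_one_plus psi_eq_0_iff divide_eq_eq)
  moreover have "1 + u \<noteq> 0" using assms(2) by (auto simp: add_eq_0_iff)
  ultimately show ?thesis using assms(1) by (simp add: Phi_def phi_def alpha_alpha_inv)
qed

lemma eval_Phi0_inv_fps:
  assumes "ereal (norm z) < fps_conv_radius (Phi0_inv_fps t)"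
  defines "c n \<equiv> complex_of_real
             (exp (- (real (Suc n) * t)) * laguerre n 1 (2 * real (Suc n) * t) / real (Suc n))"
  shows "summable (\<lambda>n. c n * z ^ Suc n)"
    and "eval_fps (Phi0_inv_fps t) z = 2 * (\<Sum>n. c n * z ^ Suc n)"
proof -
  have nth_Suc: "Phi0_inv_fps t $ Suc n * z ^ Suc n = 2 * (c n * z ^ Suc n)" for n
    by (simp add: c_def Phi0_inv_fps_nth_Suc)
  have "summable (\<lambda>n. Phi0_inv_fps t $ n * z ^ n)" using assms(1) by (rule summable_fps)
  hence summable_Suc: "summable (\<lambda>n. 2 * (c n * z ^ Suc n))"
    by (subst (asm) summable_Suc_iff[symmetric]) (simp only: nth_Suc)
  thus "summable (\<lambda>n. c n * z ^ Suc n)" by (simp only: summable_cmult_iff) simp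
  have "eval_fps (Phi0_inv_fps t) z = (\<Sum>n. Phi0_inv_fps t $ Suc n * z ^ Suc n)"
    using suminf_split_head[OF \<open>summable (\<lambda>n. Phi0_inv_fps t $ n * z ^ n)\<close>]
    by (simp add: eval_fps_def Phi0_inv_fps_nth_0)
  also have "\<dots> = 2 * (\<Sum>n. c n * z ^ Suc n)"
    unfolding nth_Suc by (rule suminf_mult) fact
  finally show "eval_fps (Phi0_inv_fps t) z = 2 * (\<Sum>n. c n * z ^ Suc n)" .
qed

lemma eventually_eval_Phi0_inv_fps_fixpoint:
  assumes "t \<ge> 0"
  shows "eventually (\<lambda>z. eval_fps (Phi0_inv_fps t) z = z * psi t (eval_fps (Phi0_inv_fps t) z)) (nhds 0)"
proof -
  define g where "g = Phi0_inv_fps t"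
  have g: "eval_fps g has_fps_expansion g"
    unfolding g_def using Phi0_inv_fps_conv_radius_pos[OF assms]
    by (intro eval_fps_has_fps_expansion) (simp add: zero_ereal_def)
  have "(psi t \<circ> eval_fps g) has_fps_expansion (psi_fps t oo g)"
    by (rule has_fps_expansion_compose[OF psi_has_fps_expansion g]) (simp add: g_def Phi0_inv_fps_nth_0)
  hence "(\<lambda>z. eval_fps g z - z * psi t (eval_fps g z)) has_fps_expansion g - fps_X * (psi_fps t oo g)"
    by (intro fps_expansion_intros g) (simp add: o_def)
  also have "g - fps_X * (psi_fps t oo g) = 0"
    unfolding g_def by (subst Phi0_inv_fps_fixpoint) simp
  finally show ?thesis by (simp add: has_fps_expansion_0_iff g_def)
qed

lemma Phi_0_inverse_series:
  assumes "t \<ge> 0"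
  defines "c n \<equiv> complex_of_real
             (exp (- (real (Suc n) * t)) * laguerre n 1 (2 * real (Suc n) * t) / real (Suc n))"
  shows "\<exists>r>0. \<forall>z\<in>ball 0 r. summable (\<lambda>n. c n * z ^ Suc n)
                             \<and> Phi 0 t (1 + 2 * (\<Sum>n. c n * z ^ Suc n)) = z"
proof -
  define U where "U = eval_fps (Phi0_inv_fps t)"
  have radius: "fps_conv_radius (Phi0_inv_fps t) > 0"
    using Phi0_inv_fps_conv_radius_pos[OF assms(1)] .
  have "eventually (\<lambda>z. U z = z * psi t (U z) \<and> ereal (norm z) < fps_conv_radius (Phi0_inv_fps t)
                         \<and> norm (U z) < 1/2 \<and> norm z < 1) (nhds 0)"
  proof (intro eventually_conj)
    show "eventually (\<lambda>z. U z = z * psi t (U z)) (nhds 0)"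
      unfolding U_def by (rule eventually_eval_Phi0_inv_fps_fixpoint[OF assms(1)])
    show "eventually (\<lambda>z. ereal (norm z) < fps_conv_radius (Phi0_inv_fps t)) (nhds 0)"
      by (rule eventually_norm_less_fps_conv_radius[OF radius])
    show "eventually (\<lambda>z. norm (U z) < 1/2) (nhds 0)"
      unfolding U_def by (rule eventually_norm_eval_fps_less[OF radius Phi0_inv_fps_nth_0]) simp
    show "eventually (\<lambda>z. norm z < 1) (nhds 0)"
      unfolding eventually_nhds_metric by (intro exI[of _ 1]) (auto simp: dist_norm)
  qed
  then obtain r where r: "r > 0"
    and near_0: "\<And>z. dist z 0 < r \<Longrightarrow> U z = z * psi t (U z)
                   \<and> ereal (norm z) < fps_conv_radius (Phi0_inv_fps t) \<and> norm (U z) < 1/2 \<and> norm z < 1"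
    unfolding eventually_nhds_metric by blast
  show ?thesis
  proof (intro exI[of _ r] conjI ballI r)
    fix z :: complex assume "z \<in> ball 0 r"
    hence z: "U z = z * psi t (U z)" "ereal (norm z) < fps_conv_radius (Phi0_inv_fps t)"
             "norm (U z) < 1/2" "norm z < 1"
      using near_0[of z] by (simp_all add: dist_commute)
    show "summable (\<lambda>n. c n * z ^ Suc n)"
      unfolding c_def by (rule eval_Phi0_inv_fps(1)[OF z(2)])
    have "U z = 2 * (\<Sum>n. c n * z ^ Suc n)"
      unfolding U_def c_def by (rule eval_Phi0_inv_fps(2)[OF z(2)])
    moreover have "U z \<noteq> -1" "U z \<noteq> -2" using z(3) by auto
    ultimately show "Phi 0 t (1 + 2 * (\<Sum>n. c n * z ^ Suc n)) = z"
      using Phi_0_one_plus_fixpoint[OF z(4) _ _ z(1)] by simp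
  qed
qed

lemma Ppoly_at_0: "Ppoly n m 0 = (if m = 0 then 1 else 0)"
proof -
  have "(\<Sum>k=0..n. of_nat (n choose k) * (- (0::complex)) ^ k * pochhammer (of_nat (2 * k)) m)
      = (\<Sum>k=0..n. if k = 0 then pochhammer (of_nat (2 * k)) m else 0)"
    by (intro sum.cong refl) simp
  also have "\<dots> = pochhammer 0 m" by simp
  finally show ?thesis by (simp add: Ppoly_def pochhammer_0_left)
qed

theorem mainTheorem3:
  fixes t :: real
  assumes "t > 0"
  shows "(\<forall>n m. Ppoly n m 0 = (if m = 0 then 1 else 0))
    \<and> (\<forall>n\<ge>1. b_coef n 0 t =
          2 * (\<Sum>k=1..n. of_nat ((2 * n) choose (n - k)) *
                 of_real (exp (- (real k * t)) * laguerre (k - 1) 1 (2 * real k * t))))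
    \<and> (\<exists>r>0. \<forall>z\<in>ball 0 r.
          summable (\<lambda>n. of_real (exp (- (real (Suc n) * t)) * laguerre n 1 (2 * real (Suc n) * t)
                            / real (Suc n)) * z ^ Suc n)
        \<and> Phi 0 t (1 + 2 * (\<Sum>n. of_real (exp (- (real (Suc n) * t)) * laguerre n 1 (2 * real (Suc n) * t)
                            / real (Suc n)) * z ^ Suc n)) = z)"
  using Ppoly_at_0 b_coef_0_eq Phi_0_inverse_series[of t] assms by auto

end
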